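(* (a) The optimal value function $\mu$ is upper semicontinuous at $0$. (b) If $X^\infty\cap\mathcal{K}(f)=\{0\}$, then $\mu$ is lower semicontinuous at $0$, and hence continuous at $0$.
   Context: Standing assumptions: $f:\mathbb{R}^n\to\mathbb{R}\cup\{\pm\infty\}$ is proper (never $-\infty$ and finite at some point) and lower semicontinuous; $X\subset\mathbb{R}^n$ is a nonempty closed set with $\operatorname{dom}f\cap X$ unbounded. $X^\infty=\{u:\exists t_k\to+\infty,\ \exists x_k\in X,\ x_k/t_k\to u\}$; $f^\infty(d)=\inf\{\liminf_{k} f(t_kd_k)/t_k:\ t_k\to+\infty,\ d_k\to d\}$; $\mathcal{K}(f)=\{d: f^\infty(d)\le 0\}$. For $u\in\mathbb{R}^n$, $f_u(x)=f(x)-\langle u,x\rangle$, and the optimal value function is $\mu(u)=\inf_{x\in X}f_u(x)$ (valued in $\mathbb{R}\cup\{\pm\infty\}$). Upper/lower semicontinuity of $\mu$ at $0$ means $\limsup_{u\to0}\mu(u)\le\mu(0)$ / $\liminf_{u\to0}\mu(u)\ge\mu(0)$. *)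

theory Defs
  imports "HOL-Analysis.Analysis" "HOL-Library.Extended_Real"
begin

definition proper_fun :: "('a \<Rightarrow> ereal) \<Rightarrow> bool" where
  "proper_fun f \<longleftrightarrow> (\<forall>x. f x \<noteq> -\<infinity>) \<and> (\<exists>x. f x \<noteq> \<infinity>)"

definition lsc_fun :: "('a::topological_space \<Rightarrow> ereal) \<Rightarrow> bool" where
  "lsc_fun f \<longleftrightarrow> (\<forall>x. f x \<le> Liminf (at x) f)"

definition effdom :: "('a \<Rightarrow> ereal) \<Rightarrow> 'a set" where
  "effdom f = {x. f x < \<infinity>}"

definition asymp_cone :: "'a::real_normed_vector set \<Rightarrow> 'a set" where
  "asymp_cone X = {u. \<exists>t x. filterlim t at_top sequentially \<and> (\<forall>k. x k \<in> X) \<and>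
        (\<lambda>k. x k /\<^sub>R t k) \<longlonglongrightarrow> u}"

definition asymp_fun :: "('a::real_normed_vector \<Rightarrow> ereal) \<Rightarrow> 'a \<Rightarrow> ereal" where
  "asymp_fun f d = Inf {Liminf sequentially (\<lambda>k. f (t k *\<^sub>R dd k) / ereal (t k)) | t dd.
        filterlim t at_top sequentially \<and> dd \<longlonglongrightarrow> d}"

definition Kset :: "('a::real_normed_vector \<Rightarrow> ereal) \<Rightarrow> 'a set" where
  "Kset f = {d. asymp_fun f d \<le> 0}"

definition optval :: "('a::real_inner \<Rightarrow> ereal) \<Rightarrow> 'a set \<Rightarrow> 'a \<Rightarrow> ereal" where
  "optval f X u = (INF x\<in>X. f x - ereal (u \<bullet> x))"

end

theory Submission
  imports Defs
begin

text \<open>The optimal value \<open>\<mu>\<close> is an infimum of the functions \<open>u \<mapsto> f x - \<langle>u,x\<rangle>\<close>, each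
  continuous in \<open>u\<close>, hence it is upper semicontinuous. For lower semicontinuity at \<open>0\<close>, take
  \<open>u\<^sub>n \<rightarrow> 0\<close> and \<open>x\<^sub>n \<in> X\<close> with \<open>f x\<^sub>n - \<langle>u\<^sub>n,x\<^sub>n\<rangle> \<le> c\<close>. If \<open>(x\<^sub>n)\<close> has a bounded
  subsequence, a limit point \<open>z \<in> X\<close> satisfies \<open>f z \<le> c\<close> by lower semicontinuity of \<open>f\<close>,
  so \<open>\<mu>(0) \<le> c\<close>. Otherwise the directions \<open>x\<^sub>n / |x\<^sub>n|\<close> accumulate at a unit vector of
  \<open>X\<^sup>\<infinity>\<close>, and dividing the bound by \<open>|x\<^sub>n|\<close> shows \<open>f\<^sup>\<infinity> \<le> 0\<close> there, which the
  hypothesis \<open>X\<^sup>\<infinity> \<inter> \<K>(f) = {0}\<close> excludes.\<close>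

lemma Limsup_INF_le:
  fixes g :: "'i \<Rightarrow> 'a \<Rightarrow> 'b::complete_lattice"
  assumes "\<And>i. i \<in> I \<Longrightarrow> Limsup F (g i) \<le> c i"
  shows "Limsup F (\<lambda>u. INF i\<in>I. g i u) \<le> (INF i\<in>I. c i)"
proof (rule INF_greatest)
  fix i assume "i \<in> I"
  then have "Limsup F (\<lambda>u. INF i\<in>I. g i u) \<le> Limsup F (g i)"
    by (intro Limsup_mono always_eventually allI INF_lower)
  also have "\<dots> \<le> c i" using assms \<open>i \<in> I\<close> .
  finally show "Limsup F (\<lambda>u. INF i\<in>I. g i u) \<le> c i" .
qed

lemma Limsup_at_tilt_le:
  fixes a :: ereal and u0 x :: "'a::real_inner"
  shows "Limsup (at u0) (\<lambda>u. a - ereal (u \<bullet> x)) \<le> a - ereal (u0 \<bullet> x)"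
proof (cases "at u0 = (bot :: 'a filter)")
  case False
  have "((\<lambda>u. a - ereal (u \<bullet> x)) \<longlongrightarrow> a - ereal (u0 \<bullet> x)) (at u0)"
    by (intro tendsto_diff_ereal_general tendsto_intros) auto
  then show ?thesis using False by (simp add: lim_imp_Limsup)
qed simp

lemma optval_Limsup_at_le: "Limsup (at u) (optval f X) \<le> optval f X u"
  unfolding optval_def[abs_def] by (rule Limsup_INF_le) (rule Limsup_at_tilt_le)

lemma lsc_fun_le_Liminf_sequentially:
  assumes "lsc_fun f" "x \<longlonglongrightarrow> l"
  shows "f l \<le> Liminf sequentially (\<lambda>n. f (x n))"
  unfolding le_Liminf_iff
proof (intro allI impI)
  fix c assume "c < f l"
  moreover have "f l \<le> Liminf (at l) f" using assms(1) unfolding lsc_fun_def by blast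
  ultimately have "eventually (\<lambda>y. c < f y) (at l)" using le_Liminf_iff by blast
  then have "eventually (\<lambda>y. c < f y) (nhds l)"
    using \<open>c < f l\<close> unfolding eventually_at_filter by (auto elim: eventually_mono)
  then show "eventually (\<lambda>n. c < f (x n)) sequentially"
    using assms(2) unfolding filterlim_iff by blast
qed

lemma lsc_fun_le_of_tilted_bound:
  fixes f :: "'a::real_inner \<Rightarrow> ereal"
  assumes "lsc_fun f" "x \<longlonglongrightarrow> l" "u \<longlonglongrightarrow> 0"
    and bound: "\<And>n. f (x n) - ereal (u n \<bullet> x n) \<le> ereal c"
  shows "f l \<le> ereal c"
proof -
  have "f l \<le> Liminf sequentially (\<lambda>n. f (x n))"
    using assms(1,2) by (rule lsc_fun_le_Liminf_sequentially)
  also have "\<dots> \<le> Liminf sequentially (\<lambda>n. ereal (c + u n \<bullet> x n))"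
    using bound by (intro Liminf_mono always_eventually allI) (simp add: ereal_minus_le)
  also have "\<dots> = ereal c"
  proof (rule lim_imp_Liminf)
    have "(\<lambda>n. c + u n \<bullet> x n) \<longlonglongrightarrow> c + 0 \<bullet> l"
      by (intro tendsto_intros assms(2,3))
    then show "(\<lambda>n. ereal (c + u n \<bullet> x n)) \<longlonglongrightarrow> ereal c" by simp
  qed simp
  finally show ?thesis .
qed

lemma Kset_memI:
  assumes "filterlim t at_top sequentially" "d \<longlonglongrightarrow> e"
    and "Limsup sequentially (\<lambda>k. f (t k *\<^sub>R d k) / ereal (t k)) \<le> 0"
  shows "e \<in> Kset f"
proof -
  have "asymp_fun f e \<le> Liminf sequentially (\<lambda>k. f (t k *\<^sub>R d k) / ereal (t k))"
    unfolding asymp_fun_def using assms(1,2) by (intro Inf_lower) blast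
  also have "\<dots> \<le> Limsup sequentially (\<lambda>k. f (t k *\<^sub>R d k) / ereal (t k))"
    by (rule Liminf_le_Limsup) simp
  finally show ?thesis using assms(3) unfolding Kset_def by simp
qed

lemma Limsup_scaled_tilted_bound_le_0:
  fixes f :: "'a::real_inner \<Rightarrow> ereal"
  assumes t: "filterlim t at_top sequentially" and "d \<longlonglongrightarrow> e" "u \<longlonglongrightarrow> 0"
    and bound: "\<And>k. f (t k *\<^sub>R d k) - ereal (u k \<bullet> (t k *\<^sub>R d k)) \<le> ereal c"
  shows "Limsup sequentially (\<lambda>k. f (t k *\<^sub>R d k) / ereal (t k)) \<le> 0"
proof -
  have "eventually (\<lambda>k. 0 < t k) sequentially"
    using t by (simp add: filterlim_at_top_dense)
  then have "eventually (\<lambda>k. f (t k *\<^sub>R d k) / ereal (t k) \<le> ereal (c / t k + u k \<bullet> d k)) sequentially"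
  proof eventually_elim
    case (elim k)
    have "f (t k *\<^sub>R d k) \<le> ereal (c + t k * (u k \<bullet> d k))"
      using bound[of k] by (simp add: ereal_minus_le)
    then have "f (t k *\<^sub>R d k) / ereal (t k) \<le> ereal (c + t k * (u k \<bullet> d k)) / ereal (t k)"
      using elim by (intro ereal_divide_right_mono) simp_all
    also have "\<dots> = ereal (c / t k + u k \<bullet> d k)"
      using elim by (simp add: add_divide_distrib)
    finally show ?case .
  qed
  then have "Limsup sequentially (\<lambda>k. f (t k *\<^sub>R d k) / ereal (t k))
      \<le> Limsup sequentially (\<lambda>k. ereal (c / t k + u k \<bullet> d k))"
    by (rule Limsup_mono)
  also have "\<dots> = 0"
  proof (rule lim_imp_Limsup)
    have "(\<lambda>k. c / t k) \<longlonglongrightarrow> 0"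
      by (rule tendsto_divide_0[OF tendsto_const filterlim_at_top_imp_at_infinity[OF t]])
    then have "(\<lambda>k. c / t k + u k \<bullet> d k) \<longlonglongrightarrow> 0 + 0 \<bullet> e"
      by (intro tendsto_intros assms(2,3))
    then show "(\<lambda>k. ereal (c / t k + u k \<bullet> d k)) \<longlonglongrightarrow> 0"
      by (simp add: zero_ereal_def)
  qed simp
  finally show ?thesis .
qed

lemma escaping_tilted_bound_direction:
  fixes f :: "'a::euclidean_space \<Rightarrow> ereal"
  assumes X: "\<And>n. x n \<in> X" and escape: "filterlim (\<lambda>n. norm (x n)) at_top sequentially"
    and "u \<longlonglongrightarrow> 0" and bound: "\<And>n. f (x n) - ereal (u n \<bullet> x n) \<le> ereal c"
  obtains e where "e \<noteq> 0" "e \<in> asymp_cone X" "e \<in> Kset f"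
proof -
  define d where "d n = x n /\<^sub>R norm (x n)" for n
  have "bounded (range d)"
    unfolding bounded_iff d_def by (intro exI[of _ 1]) (auto simp: field_simps)
  then obtain s e where s: "strict_mono s" "(d \<circ> s) \<longlonglongrightarrow> e"
    using bounded_imp_convergent_subsequence by blast
  define t where "t n = norm (x (s n))" for n
  have t: "filterlim t at_top sequentially"
    unfolding t_def using filterlim_compose[OF escape filterlim_subseq[OF s(1)]] .
  have "eventually (\<lambda>n. 0 < t n) sequentially"
    using t by (simp add: filterlim_at_top_dense)
  then have "eventually (\<lambda>n. (d \<circ> s) n \<in> sphere 0 1) sequentially"
    by eventually_elim (simp add: d_def t_def)
  then have "e \<in> sphere 0 1"
    by (rule Lim_in_closed_set[OF closed_sphere _ _ s(2)]) simp
  moreover have "e \<in> asymp_cone X"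
    unfolding asymp_cone_def using t X s(2)
    by (intro CollectI exI[of _ t] exI[of _ "x \<circ> s"]) (simp add: d_def t_def comp_def)
  moreover have "e \<in> Kset f"
  proof (rule Kset_memI[OF t])
    have scaled: "t n *\<^sub>R d (s n) = x (s n)" for n
      by (cases "x (s n) = 0") (simp_all add: d_def t_def)
    show "Limsup sequentially (\<lambda>k. f (t k *\<^sub>R (d \<circ> s) k) / ereal (t k)) \<le> 0"
    proof (rule Limsup_scaled_tilted_bound_le_0[OF t s(2)])
      show "(u \<circ> s) \<longlonglongrightarrow> 0" using LIMSEQ_subseq_LIMSEQ[OF \<open>u \<longlonglongrightarrow> 0\<close> s(1)] .
      show "f (t k *\<^sub>R (d \<circ> s) k) - ereal ((u \<circ> s) k \<bullet> (t k *\<^sub>R (d \<circ> s) k)) \<le> ereal c" for k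
        using bound[of "s k"] by (simp only: comp_def scaled)
    qed
  qed (rule s(2))
  ultimately show ?thesis by (intro that) auto
qed


lemma ex_le_of_tilted_bound:
  fixes f :: "'a::euclidean_space \<Rightarrow> ereal"
  assumes lsc: "lsc_fun f" and "closed X" and K: "asymp_cone X \<inter> Kset f \<subseteq> {0}"
    and X: "\<And>n. x n \<in> X" and u: "u \<longlonglongrightarrow> 0"
    and bound: "\<And>n. f (x n) - ereal (u n \<bullet> x n) \<le> ereal c"
  shows "\<exists>z\<in>X. f z \<le> ereal c"
proof (cases "filterlim (\<lambda>n. norm (x n)) at_top sequentially")
  case True
  then obtain e where "e \<noteq> 0" "e \<in> asymp_cone X" "e \<in> Kset f"
    using escaping_tilted_bound_direction[OF X _ u bound] by blast
  with K show ?thesis by blast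
next
  case False
  then obtain B where "\<not> eventually (\<lambda>n. B < norm (x n)) sequentially"
    by (auto simp: filterlim_at_top_dense)
  then obtain r :: "nat \<Rightarrow> nat" where r: "strict_mono r" "\<And>n. norm (x (r n)) \<le> B"
    using not_eventually_sequentiallyD by (metis not_less)
  have "bounded (range (x \<circ> r))"
    using r(2) unfolding bounded_iff by auto
  then obtain s l where s: "strict_mono s" "(x \<circ> r \<circ> s) \<longlonglongrightarrow> l"
    using bounded_imp_convergent_subsequence by blast
  have "l \<in> X"
    using closed_sequentially[OF \<open>closed X\<close> _ s(2)] X by simp
  moreover have "f l \<le> ereal c"
  proof (rule lsc_fun_le_of_tilted_bound[OF lsc s(2)])
    show "(u \<circ> r \<circ> s) \<longlonglongrightarrow> 0"
      using LIMSEQ_subseq_LIMSEQ[OF LIMSEQ_subseq_LIMSEQ[OF u r(1)] s(1)] by (simp add: o_assoc)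
  qed (simp add: bound)
  ultimately show ?thesis by blast
qed

lemma optval_le_Liminf_at_0:
  fixes f :: "'a::euclidean_space \<Rightarrow> ereal"
  assumes "lsc_fun f" "closed X" "asymp_cone X \<inter> Kset f \<subseteq> {0}"
  shows "optval f X 0 \<le> Liminf (at 0) (optval f X)"
  unfolding le_Liminf_iff
proof (intro allI impI)
  fix y assume "y < optval f X 0"
  then obtain c where c: "y < ereal c" "ereal c < optval f X 0"
    using ereal_dense2 by blast
  show "eventually (\<lambda>u. y < optval f X u) (at 0)"
  proof (rule sequentially_imp_eventually_at, intro allI impI)
    fix v :: "nat \<Rightarrow> 'a" assume v: "(\<forall>n. v n \<noteq> 0) \<and> v \<longlonglongrightarrow> 0"
    show "eventually (\<lambda>n. y < optval f X (v n)) sequentially"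
    proof (rule ccontr)
      assume "\<not> ?thesis"
      then obtain r :: "nat \<Rightarrow> nat" where r: "strict_mono r" "\<And>n. optval f X (v (r n)) \<le> y"
        using not_eventually_sequentiallyD by (metis not_less)
      have "\<forall>n. \<exists>x\<in>X. f x - ereal (v (r n) \<bullet> x) < ereal c"
      proof
        fix n
        have "optval f X (v (r n)) < ereal c" using r(2)[of n] c(1) by (rule order_le_less_trans)
        then show "\<exists>x\<in>X. f x - ereal (v (r n) \<bullet> x) < ereal c"
          unfolding optval_def INF_less_iff .
      qed
      then obtain x where x: "\<And>n. x n \<in> X" "\<And>n. f (x n) - ereal ((v \<circ> r) n \<bullet> x n) < ereal c"
        by (metis comp_apply)
      have "(v \<circ> r) \<longlonglongrightarrow> 0"
        using LIMSEQ_subseq_LIMSEQ[OF conjunct2[OF v] r(1)] .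
      then obtain z where z: "z \<in> X" "f z \<le> ereal c"
        using ex_le_of_tilted_bound[of f X x "v \<circ> r" c, OF assms x(1)]
          less_imp_le[OF x(2)] by blast
      have "optval f X 0 \<le> f z"
        unfolding optval_def using INF_lower[OF z(1), of "\<lambda>x. f x - ereal (0 \<bullet> x)"] by simp
      with z(2) c(2) show False by (meson leD order_trans)
    qed
  qed
qed

theorem mainTheorem8:
  fixes f :: "'a::euclidean_space \<Rightarrow> ereal" and X :: "'a set"
  assumes "proper_fun f" and "lsc_fun f"
    and "closed X" and "X \<noteq> {}" and "\<not> bounded (effdom f \<inter> X)"
  shows "Limsup (at 0) (optval f X) \<le> optval f X 0
    \<and> (asymp_cone X \<inter> Kset f = {0} \<longrightarrow>
         optval f X 0 \<le> Liminf (at 0) (optval f X)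
         \<and> (optval f X \<longlongrightarrow> optval f X 0) (at 0))"
proof (intro conjI impI)
  show usc: "Limsup (at 0) (optval f X) \<le> optval f X 0"
    by (rule optval_Limsup_at_le)
  assume "asymp_cone X \<inter> Kset f = {0}"
  then show lsc: "optval f X 0 \<le> Liminf (at 0) (optval f X)"
    using assms(2,3) by (intro optval_le_Liminf_at_0) auto
  show "(optval f X \<longlongrightarrow> optval f X 0) (at 0)"
    using usc lsc by (intro order_tendstoI) (auto simp: le_Liminf_iff Limsup_le_iff)
qed

end
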